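(* Let $\mathcal L$ be a linearly ordered non-discrete MV-algebra and let $0<p<q<1$ in $L$. Then $$\,]q,1]\sqsubseteq\!\!\to\,]p,1]=[q\to p,1].$$
   Context: $\mathcal L=(L,\oplus,\lnot,0)$ is a linearly ordered MV-algebra. We write $1=\lnot 0$ and $x\to y=\lnot x\oplus y$. Non-discrete means no element has an immediate successor or an immediate predecessor. We write $[p,1]=\{x: x\ge p\}$ and $]p,1]=\{x:x>p\}$. For an upward-closed $\mathcal F$ and $a\in L$, let $\mathcal F_a=\{z:z\to a\notin\mathcal F\}$. For upward-closed $\mathcal F\subseteq\mathcal G$ we put $\mathcal F\sqsubseteq\!\!\to\mathcal G=\bigcap_{a\in L\setminus\mathcal G}\mathcal F_a$. *)

theory Defs
  imports Main
begin

text \<open>An MV-algebra (L, oplus, neg, 0) whose carrier is the whole type 'a,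
  given by the standard (Chang/Mangani) axioms.\<close>
definition mv_algebra :: "('a \<Rightarrow> 'a \<Rightarrow> 'a) \<Rightarrow> ('a \<Rightarrow> 'a) \<Rightarrow> 'a \<Rightarrow> bool" where
  "mv_algebra oplus neg zero \<longleftrightarrow>
     (\<forall>x y z. oplus x (oplus y z) = oplus (oplus x y) z) \<and>
     (\<forall>x y. oplus x y = oplus y x) \<and>
     (\<forall>x. oplus x zero = x) \<and>
     (\<forall>x. neg (neg x) = x) \<and>
     (\<forall>x. oplus x (neg zero) = neg zero) \<and>
     (\<forall>x y. oplus (neg (oplus (neg x) y)) y = oplus (neg (oplus (neg y) x)) x)"

definition mv_imp :: "('a \<Rightarrow> 'a \<Rightarrow> 'a) \<Rightarrow> ('a \<Rightarrow> 'a) \<Rightarrow> 'a \<Rightarrow> 'a \<Rightarrow> 'a" where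
  "mv_imp oplus neg x y = oplus (neg x) y"

definition mv_le :: "('a \<Rightarrow> 'a \<Rightarrow> 'a) \<Rightarrow> ('a \<Rightarrow> 'a) \<Rightarrow> 'a \<Rightarrow> 'a \<Rightarrow> 'a \<Rightarrow> bool" where
  "mv_le oplus neg zero x y \<longleftrightarrow> mv_imp oplus neg x y = neg zero"

definition mv_less :: "('a \<Rightarrow> 'a \<Rightarrow> 'a) \<Rightarrow> ('a \<Rightarrow> 'a) \<Rightarrow> 'a \<Rightarrow> 'a \<Rightarrow> 'a \<Rightarrow> bool" where
  "mv_less oplus neg zero x y \<longleftrightarrow> mv_le oplus neg zero x y \<and> x \<noteq> y"

definition mv_linear :: "('a \<Rightarrow> 'a \<Rightarrow> 'a) \<Rightarrow> ('a \<Rightarrow> 'a) \<Rightarrow> 'a \<Rightarrow> bool" where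
  "mv_linear oplus neg zero \<longleftrightarrow> (\<forall>x y. mv_le oplus neg zero x y \<or> mv_le oplus neg zero y x)"

definition mv_immediate_succ :: "('a \<Rightarrow> 'a \<Rightarrow> 'a) \<Rightarrow> ('a \<Rightarrow> 'a) \<Rightarrow> 'a \<Rightarrow> 'a \<Rightarrow> 'a \<Rightarrow> bool" where
  "mv_immediate_succ oplus neg zero x y \<longleftrightarrow>
     mv_less oplus neg zero x y \<and> \<not> (\<exists>z. mv_less oplus neg zero x z \<and> mv_less oplus neg zero z y)"

definition mv_non_discrete :: "('a \<Rightarrow> 'a \<Rightarrow> 'a) \<Rightarrow> ('a \<Rightarrow> 'a) \<Rightarrow> 'a \<Rightarrow> bool" where
  "mv_non_discrete oplus neg zero \<longleftrightarrow>
     (\<forall>x. \<not> (\<exists>y. mv_immediate_succ oplus neg zero x y)) \<and>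
     (\<forall>x. \<not> (\<exists>y. mv_immediate_succ oplus neg zero y x))"

definition mv_Fa :: "('a \<Rightarrow> 'a \<Rightarrow> 'a) \<Rightarrow> ('a \<Rightarrow> 'a) \<Rightarrow> 'a set \<Rightarrow> 'a \<Rightarrow> 'a set" where
  "mv_Fa oplus neg F a = {z. mv_imp oplus neg z a \<notin> F}"

definition mv_sqimp :: "('a \<Rightarrow> 'a \<Rightarrow> 'a) \<Rightarrow> ('a \<Rightarrow> 'a) \<Rightarrow> 'a set \<Rightarrow> 'a set \<Rightarrow> 'a set" where
  "mv_sqimp oplus neg F G = (\<Inter>a \<in> UNIV - G. mv_Fa oplus neg F a)"

end

theory Submission
  imports Defs
begin

(* Write x -> y for the MV-implication (neg x) + y and <= for the
   natural order.  In a linearly ordered MV-algebra the complement of ]p,1] is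
   [0,p], and z -> a lies outside ]q,1] iff z -> a <= q.  Hence
     ]q,1] sq-> ]p,1] = {z. for all a <= p, z -> a <= q} = {z. z -> p <= q},
   the last step because z -> a is monotone in a.  Finally, for p <= q < 1 the
   residuation-like equivalence  z -> p <= q  <->  q -> p <= z  holds: both
   directions rest on the identity (y -> x) -> x = y for x <= y (the MV join),
   the antitonicity of -> in its first argument, and the fact that z -> p = 1
   for z <= p, which is excluded by q < 1.
   The file first develops these order facts for an arbitrary MV-algebra, then
   the two linear-order lemmas, and derives the theorem from them. *)

locale mv =
  fixes oplus :: "'a \<Rightarrow> 'a \<Rightarrow> 'a" (infixl "\<oplus>" 65) and neg :: "'a \<Rightarrow> 'a" and zero :: 'a
  assumes mv_algebra: "mv_algebra oplus neg zero"
begin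

abbreviation one :: 'a where "one \<equiv> neg zero"
abbreviation imp (infixr "\<rightharpoonup>" 60) where "x \<rightharpoonup> y \<equiv> mv_imp oplus neg x y"
abbreviation le (infix "\<preceq>" 50) where "x \<preceq> y \<equiv> mv_le oplus neg zero x y"

lemma assoc: "x \<oplus> (y \<oplus> z) = x \<oplus> y \<oplus> z"
  and comm: "x \<oplus> y = y \<oplus> x"
  and zero_right: "x \<oplus> zero = x"
  and neg_neg: "neg (neg x) = x"
  and one_right: "x \<oplus> one = one"
  and join_comm: "neg (neg x \<oplus> y) \<oplus> y = neg (neg y \<oplus> x) \<oplus> x"
  using mv_algebra unfolding mv_algebra_def by blast+

lemma imp_def': "x \<rightharpoonup> y = neg x \<oplus> y"
  by (simp add: mv_imp_def)

lemma le_iff_imp: "x \<preceq> y \<longleftrightarrow> x \<rightharpoonup> y = one"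
  by (simp add: mv_le_def)

lemma neg_oplus_self: "neg x \<oplus> x = one"
  using join_comm[of one x] by (simp add: neg_neg one_right zero_right comm)

lemma le_one: "x \<preceq> one"
  by (simp add: le_iff_imp imp_def' one_right)

text \<open>The natural order is the "divisibility" order of the monoid (L, +, 0).\<close>
lemma le_oplus: "x \<preceq> x \<oplus> z"
  unfolding le_iff_imp imp_def' by (metis assoc neg_oplus_self comm one_right)

lemma le_obtain:
  assumes "x \<preceq> y" obtains z where "y = x \<oplus> z"
proof
  have "neg (neg x \<oplus> y) \<oplus> y = y"
    using assms by (simp add: le_iff_imp imp_def' comm zero_right neg_neg)
  then show "y = x \<oplus> neg (neg y \<oplus> x)"
    by (metis join_comm comm)
qed

lemma le_trans [trans]: "x \<preceq> y \<Longrightarrow> y \<preceq> w \<Longrightarrow> x \<preceq> w"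
  by (metis assoc le_oplus le_obtain)

lemma le_antisym: "x \<preceq> y \<Longrightarrow> y \<preceq> x \<Longrightarrow> x = y"
  unfolding le_iff_imp imp_def' by (metis comm zero_right neg_neg join_comm)

lemma oplus_mono: "x \<preceq> y \<Longrightarrow> z \<oplus> x \<preceq> z \<oplus> y"
  by (metis assoc le_oplus le_obtain)

lemma neg_antimono: "x \<preceq> y \<Longrightarrow> neg y \<preceq> neg x"
  unfolding le_iff_imp imp_def' by (metis comm neg_neg)

lemma imp_mono: "a \<preceq> b \<Longrightarrow> z \<rightharpoonup> a \<preceq> z \<rightharpoonup> b"
  unfolding imp_def' by (rule oplus_mono)

lemma imp_antimono: "x \<preceq> y \<Longrightarrow> y \<rightharpoonup> a \<preceq> x \<rightharpoonup> a"
  unfolding imp_def' by (metis comm oplus_mono neg_antimono)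

text \<open>(y -> x) -> x is the join of x and y; in particular it equals y when x \<le> y.\<close>
lemma imp_imp_eq: "x \<preceq> y \<Longrightarrow> (y \<rightharpoonup> x) \<rightharpoonup> x = y"
  unfolding le_iff_imp imp_def' by (metis join_comm neg_neg comm zero_right)

end

locale linear_mv = mv +
  assumes linear: "mv_linear oplus neg zero"
begin

abbreviation less (infix "\<prec>" 50) where "x \<prec> y \<equiv> mv_less oplus neg zero x y"

lemma le_total: "x \<preceq> y \<or> y \<preceq> x"
  using linear unfolding mv_linear_def by blast

lemma not_less: "\<not> x \<prec> y \<longleftrightarrow> y \<preceq> x"
  unfolding mv_less_def using le_total le_antisym by metis

text \<open>In a chain, ]q,1] sq-> ]p,1] consists of the z with z -> a \<le> q for all a \<le> p,
  since the complement of ]p,1] is [0,p].\<close>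
lemma sqimp_open_upsets:
  "mv_sqimp oplus neg {x. q \<prec> x} {x. p \<prec> x} = {z. \<forall>a. a \<preceq> p \<longrightarrow> z \<rightharpoonup> a \<preceq> q}"
  unfolding mv_sqimp_def mv_Fa_def using not_less by auto

text \<open>By monotonicity of -> in its second argument it suffices to test a = p.\<close>
lemma bounded_imps_iff: "(\<forall>a. a \<preceq> p \<longrightarrow> z \<rightharpoonup> a \<preceq> q) \<longleftrightarrow> z \<rightharpoonup> p \<preceq> q"
  using imp_mono le_trans le_iff_imp neg_oplus_self imp_def' by metis

lemma imp_le_iff:
  assumes pq: "p \<preceq> q" and q_ne_one: "q \<noteq> one"
  shows "z \<rightharpoonup> p \<preceq> q \<longleftrightarrow> q \<rightharpoonup> p \<preceq> z"
proof
  assume zp: "z \<rightharpoonup> p \<preceq> q"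
  have "p \<preceq> z"
  proof (rule ccontr)
    assume "\<not> p \<preceq> z"
    then have "z \<rightharpoonup> p = one"
      using le_total le_iff_imp by blast
    then show False
      using zp q_ne_one le_one le_antisym by metis
  qed
  have "q \<rightharpoonup> p \<preceq> (z \<rightharpoonup> p) \<rightharpoonup> p"
    using zp by (rule imp_antimono)
  also have "(z \<rightharpoonup> p) \<rightharpoonup> p = z"
    using \<open>p \<preceq> z\<close> by (rule imp_imp_eq)
  finally show "q \<rightharpoonup> p \<preceq> z" .
next
  assume "q \<rightharpoonup> p \<preceq> z"
  then have "z \<rightharpoonup> p \<preceq> (q \<rightharpoonup> p) \<rightharpoonup> p"
    by (rule imp_antimono)
  also have "(q \<rightharpoonup> p) \<rightharpoonup> p = q"
    using pq by (rule imp_imp_eq)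
  finally show "z \<rightharpoonup> p \<preceq> q" .
qed

end

theorem mainTheorem14:
  fixes oplus :: "'a \<Rightarrow> 'a \<Rightarrow> 'a" and neg :: "'a \<Rightarrow> 'a" and zero :: 'a and p q :: 'a
  assumes "mv_algebra oplus neg zero"
    and "mv_linear oplus neg zero"
    and "mv_non_discrete oplus neg zero"
    and "mv_less oplus neg zero zero p"
    and "mv_less oplus neg zero p q"
    and "mv_less oplus neg zero q (neg zero)"
  shows "mv_sqimp oplus neg {x. mv_less oplus neg zero q x} {x. mv_less oplus neg zero p x}
         = {x. mv_le oplus neg zero (mv_imp oplus neg q p) x}"
proof -
  interpret linear_mv oplus neg zero
    using assms(1,2) by (simp add: linear_mv_def linear_mv_axioms_def mv_def)
  have "p \<preceq> q" and "q \<noteq> one"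
    using assms(5,6) unfolding mv_less_def by auto
  show ?thesis
    unfolding sqimp_open_upsets bounded_imps_iff imp_le_iff[OF \<open>p \<preceq> q\<close> \<open>q \<noteq> one\<close>] by (rule refl)
qed

end
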